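(* Let $d\in\mathbb N$, let $\emptyset\neq\Theta\subset\mathbb R^d$ be a $C^1$-hypersurface of positive reach, and let $\mu\colon\mathbb R^d\to\mathbb R^d$, $\sigma\colon\mathbb R^d\to\mathbb R^{d\times d}$ satisfy: there is $\varepsilon\in(0,\mathrm{reach}(\Theta))$ such that $\mu$ and $\sigma$ are bounded on $\Theta^\varepsilon$; $\mu$ is intrinsic Lipschitz continuous on $\mathbb R^d\setminus\Theta$; $\sigma$ is Lipschitz continuous. Then there exists $c\in(0,\infty)$ such that $\|\mu(x)\|+\|\sigma(x)\|\le c(1+\|x\|)$ for all $x\in\mathbb R^d$.
   Context: $\|\cdot\|$ is the Euclidean norm on vectors and the Frobenius norm on matrices. A nonempty $\Theta\subset\mathbb R^d$ is a $C^1$-hypersurface if for every $x\in\Theta$ there are open $U,V$ with $x\in U$ and a $C^1$-diffeomorphism $\phi\colon U\to V$ with $\phi(\Theta\cap U)=(\mathbb R^{d-1}\times\{0\})\cap V$ ($\{0\}$ if $d=1$). $d(x,\Theta)=\inf_{y\in\Theta}\|x-y\|$, $\Theta^\varepsilon=\{x:d(x,\Theta)<\varepsilon\}$, $\mathrm{reach}(\Theta)=\sup\{\varepsilon\ge0:$ every point of $\Theta^\varepsilon$ has a unique nearest point in $\Theta\}$. Intrinsic Lipschitz continuity on $A$: $\|f(x)-f(y)\|\le L\rho_A(x,y)$ for all $x,y\in A$, where $\rho_A(x,y)$ is the infimum of the lengths $l(\gamma)=\sup\sum_k\|\gamma(t_k)-\gamma(t_{k-1})\|$ (over partitions of $[0,1]$)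 of continuous curves $\gamma\colon[0,1]\to A$ from $x$ to $y$. *)

theory Defs
  imports "HOL-Analysis.Analysis"
begin

definition C1_on :: "('a::euclidean_space \<Rightarrow> 'b::euclidean_space) \<Rightarrow> 'a set \<Rightarrow> bool" where
  "C1_on f U \<longleftrightarrow> (\<exists>f'. (\<forall>x\<in>U. (f has_derivative blinfun_apply (f' x)) (at x)) \<and> continuous_on U f')"

definition C1_diffeo :: "('a::euclidean_space \<Rightarrow> 'a) \<Rightarrow> 'a set \<Rightarrow> 'a set \<Rightarrow> bool" where
  "C1_diffeo \<phi> U V \<longleftrightarrow> bij_betw \<phi> U V \<and> C1_on \<phi> U \<and> C1_on (inv_into U \<phi>) V"

text \<open>C^1-hypersurface: locally straightened onto a coordinate hyperplane
  (R^{d-1} x {0}, with the distinguished coordinate i).\<close>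
definition C1_hypersurface :: "(real^'n) set \<Rightarrow> bool" where
  "C1_hypersurface \<Theta> \<longleftrightarrow> \<Theta> \<noteq> {} \<and>
     (\<forall>x\<in>\<Theta>. \<exists>U V \<phi>. open U \<and> open V \<and> x \<in> U \<and> C1_diffeo \<phi> U V \<and>
        (\<exists>i. \<phi> ` (\<Theta> \<inter> U) = {y \<in> V. y $ i = 0}))"

definition nbhd :: "'a::metric_space set \<Rightarrow> real \<Rightarrow> 'a set" where
  "nbhd \<Theta> \<epsilon> = {x. infdist x \<Theta> < \<epsilon>}"

definition reach :: "'a::metric_space set \<Rightarrow> ereal" where
  "reach \<Theta> = Sup (ereal ` {\<epsilon>. \<epsilon> \<ge> 0 \<and>
      (\<forall>x\<in>nbhd \<Theta> \<epsilon>. \<exists>!y. y \<in> \<Theta> \<and> dist x y = infdist x \<Theta>)})"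

definition curve_length :: "(real \<Rightarrow> 'a::real_normed_vector) \<Rightarrow> ereal" where
  "curve_length \<gamma> = Sup {ereal (\<Sum>k<n. norm (\<gamma> (t (Suc k)) - \<gamma> (t k))) | t n.
      t 0 = 0 \<and> t n = 1 \<and> (\<forall>k<n. t k \<le> t (Suc k))}"

definition intrinsic_dist :: "'a::real_normed_vector set \<Rightarrow> 'a \<Rightarrow> 'a \<Rightarrow> ereal" where
  "intrinsic_dist A x y = Inf {curve_length \<gamma> | \<gamma>.
      continuous_on {0..1} \<gamma> \<and> \<gamma> ` {0..1} \<subseteq> A \<and> \<gamma> 0 = x \<and> \<gamma> 1 = y}"

definition intrinsic_lipschitz_on :: "'a::real_normed_vector set \<Rightarrow> ('a \<Rightarrow> 'b::real_normed_vector) \<Rightarrow> bool" where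
  "intrinsic_lipschitz_on A f \<longleftrightarrow> (\<exists>L::real. L \<ge> 0 \<and>
      (\<forall>x\<in>A. \<forall>y\<in>A. ereal (norm (f x - f y)) \<le> ereal L * intrinsic_dist A x y))"

end

theory Submission
  imports Defs
begin

text \<open>Near \<Theta> the drift \<mu> is bounded by hypothesis. From a point x at distance
  \<delta> \<ge> \<epsilon> from \<Theta>, walk straight towards an almost nearest point of \<Theta> until
  reaching the \<epsilon>-neighbourhood; the walk has length at most \<delta> and stays in the
  open ball of radius \<delta> about x, which misses \<Theta>. Intrinsic Lipschitz continuity
  on the complement of \<Theta> therefore gives \<parallel>\<mu> x\<parallel> \<le> M + L \<delta> \<le> M + L (\<parallel>x\<parallel> + \<parallel>\<theta>\<parallel>)
  for any \<theta> \<in> \<Theta>, while \<sigma> grows linearly as every Lipschitz map does.\<close>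

lemma curve_length_linepath_le:
  fixes a b :: "'a::real_normed_vector"
  shows "curve_length (linepath a b) \<le> ereal (dist a b)"
  unfolding curve_length_def
proof (rule Sup_least, clarify)
  fix t :: "nat \<Rightarrow> real" and n
  assume t: "t 0 = 0" "t n = 1" "\<forall>k<n. t k \<le> t (Suc k)"
  have step: "norm (linepath a b (t (Suc k)) - linepath a b (t k)) = (t (Suc k) - t k) * dist a b"
    if "k < n" for k
  proof -
    have "linepath a b (t (Suc k)) - linepath a b (t k) = (t (Suc k) - t k) *\<^sub>R (b - a)"
      by (simp add: linepath_def algebra_simps)
    then show ?thesis
      using t(3) that by (simp add: dist_norm norm_minus_commute)
  qed
  have "(\<Sum>k<n. norm (linepath a b (t (Suc k)) - linepath a b (t k)))
      = (\<Sum>k<n. (t (Suc k) - t k) * dist a b)"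
    using step by simp
  also have "\<dots> = (t n - t 0) * dist a b"
    by (simp add: sum_distrib_right[symmetric] sum_lessThan_telescope)
  finally show "ereal (\<Sum>k<n. norm (linepath a b (t (Suc k)) - linepath a b (t k)))
      \<le> ereal (dist a b)"
    using t by simp
qed

lemma intrinsic_dist_le_dist:
  fixes a b :: "'a::real_normed_vector"
  assumes "closed_segment a b \<subseteq> A"
  shows "intrinsic_dist A a b \<le> ereal (dist a b)"
proof -
  have "intrinsic_dist A a b \<le> curve_length (linepath a b)"
    unfolding intrinsic_dist_def
  proof (rule Inf_lower, rule CollectI, rule exI[of _ "linepath a b"])
    show "curve_length (linepath a b) = curve_length (linepath a b) \<and>
        continuous_on {0..1} (linepath a b) \<and> linepath a b ` {0..1} \<subseteq> A \<and>
        linepath a b 0 = a \<and> linepath a b 1 = b"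
      using assms by (simp add: linepath_image_01 linepath_0' linepath_1' continuous_on_linepath)
  qed
  also have "\<dots> \<le> ereal (dist a b)"
    by (rule curve_length_linepath_le)
  finally show ?thesis .
qed

lemma intrinsic_lipschitz_on_segmentE:
  assumes "intrinsic_lipschitz_on A f"
  obtains L where "L \<ge> 0"
    and "\<And>x y. closed_segment x y \<subseteq> A \<Longrightarrow> norm (f x - f y) \<le> L * dist x y"
proof -
  obtain L where L: "L \<ge> 0"
    "\<forall>x\<in>A. \<forall>y\<in>A. ereal (norm (f x - f y)) \<le> ereal L * intrinsic_dist A x y"
    using assms unfolding intrinsic_lipschitz_on_def by blast
  have "norm (f x - f y) \<le> L * dist x y" if "closed_segment x y \<subseteq> A" for x y
  proof -
    have "x \<in> A" "y \<in> A"
      using that by auto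
    then have "ereal (norm (f x - f y)) \<le> ereal L * intrinsic_dist A x y"
      using L(2) by blast
    also have "\<dots> \<le> ereal L * ereal (dist x y)"
      using L(1) intrinsic_dist_le_dist[OF that] by (intro ereal_mult_left_mono) auto
    finally show ?thesis
      by simp
  qed
  with L(1) show thesis
    by (rule that)
qed

lemma ball_infdist_disjoint: "ball x (infdist x A) \<inter> A = {}"
proof -
  have "y \<notin> A" if "dist x y < infdist x A" for y
    using infdist_le[of y A x] that by linarith
  then show ?thesis
    by auto
qed

lemma segment_into_nbhd_avoiding:
  fixes \<Theta> :: "'a::real_normed_vector set"
  assumes "\<Theta> \<noteq> {}" and "0 < \<epsilon>" and "\<epsilon> \<le> infdist x \<Theta>"
  obtains z where "z \<in> nbhd \<Theta> \<epsilon>" and "dist x z \<le> infdist x \<Theta>"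
    and "closed_segment x z \<inter> \<Theta> = {}"
proof -
  define \<delta> where "\<delta> = infdist x \<Theta>"
  have "\<exists>r\<in>(\<lambda>a. dist x a) ` \<Theta>. r < \<delta> + \<epsilon>/2"
    using assms(1,2) infdist_notempty[OF assms(1), of x]
    by (intro cInf_lessD) (auto simp: \<delta>_def)
  then obtain \<theta> where "\<theta> \<in> \<Theta>" and "dist x \<theta> < \<delta> + \<epsilon>/2"
    by blast
  define D where "D = dist x \<theta>"
  have "D < \<delta> + \<epsilon>/2"
    using \<open>dist x \<theta> < \<delta> + \<epsilon>/2\<close> by (simp add: D_def)
  have "\<delta> \<le> D"
    unfolding \<delta>_def D_def using \<open>\<theta> \<in> \<Theta>\<close> by (rule infdist_le)
  then have "\<epsilon> \<le> D"
    using assms(3) by (simp add: \<delta>_def)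
  define u where "u = \<epsilon> / (2 * D)"
  have u: "0 < u" "u \<le> 1" "u * D = \<epsilon> / 2"
    using \<open>\<epsilon> \<le> D\<close> assms(2) by (auto simp: u_def field_simps)
  define z where "z = \<theta> + u *\<^sub>R (x - \<theta>)"
  have "dist z \<theta> = u * D"
    using u(1) by (simp add: z_def D_def dist_norm)
  then have "z \<in> nbhd \<Theta> \<epsilon>"
    using infdist_le[OF \<open>\<theta> \<in> \<Theta>\<close>, of z] u(3) assms(2) by (simp add: nbhd_def)
  have "x - z = (1 - u) *\<^sub>R (x - \<theta>)"
    by (simp add: z_def algebra_simps)
  then have "dist x z = (1 - u) * D"
    using u(2) by (simp add: dist_norm D_def)
  also have "\<dots> = D - \<epsilon> / 2"
    using u(3) by (simp add: left_diff_distrib)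
  finally have "dist x z < \<delta>"
    using \<open>D < \<delta> + \<epsilon>/2\<close> by linarith
  then have "closed_segment x z \<subseteq> ball x \<delta>"
    using \<open>\<delta> \<le> D\<close> \<open>\<epsilon> \<le> D\<close> assms(2,3)
    by (intro closed_segment_subset) (auto simp: \<delta>_def)
  then have "closed_segment x z \<inter> \<Theta> = {}"
    using ball_infdist_disjoint[of x \<Theta>] by (auto simp: \<delta>_def)
  with \<open>z \<in> nbhd \<Theta> \<epsilon>\<close> \<open>dist x z < \<delta>\<close> show thesis
    using that unfolding \<delta>_def by simp
qed

lemma norm_le_nbhd_bound_plus_infdist:
  fixes f :: "'a::real_normed_vector \<Rightarrow> 'b::real_normed_vector"
  assumes "\<Theta> \<noteq> {}" and "0 < \<epsilon>"
    and bound: "\<And>y. y \<in> nbhd \<Theta> \<epsilon> \<Longrightarrow> norm (f y) \<le> M"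
    and "L \<ge> 0"
    and lip: "\<And>x y. closed_segment x y \<subseteq> UNIV - \<Theta> \<Longrightarrow> norm (f x - f y) \<le> L * dist x y"
  shows "norm (f x) \<le> M + L * infdist x \<Theta>"
proof (cases "x \<in> nbhd \<Theta> \<epsilon>")
  case True
  then show ?thesis
    using bound \<open>L \<ge> 0\<close> by (simp add: add_increasing2 infdist_nonneg)
next
  case False
  then have "\<epsilon> \<le> infdist x \<Theta>"
    by (simp add: nbhd_def)
  then obtain z where z: "z \<in> nbhd \<Theta> \<epsilon>" "dist x z \<le> infdist x \<Theta>"
    "closed_segment x z \<inter> \<Theta> = {}"
    by (rule segment_into_nbhd_avoiding[OF assms(1,2)])
  have "norm (f x) \<le> norm (f z) + norm (f x - f z)"
    by (rule norm_triangle_sub)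
  also have "\<dots> \<le> M + L * dist x z"
    using lip[of x z] z(3) bound[OF z(1)] by (intro add_mono) auto
  also have "\<dots> \<le> M + L * infdist x \<Theta>"
    using z(2) \<open>L \<ge> 0\<close> by (simp add: mult_left_mono)
  finally show ?thesis .
qed

lemma lipschitz_on_norm_le:
  fixes f :: "'a::real_normed_vector \<Rightarrow> 'b::real_normed_vector"
  assumes "L-lipschitz_on UNIV f"
  shows "norm (f x) \<le> norm (f 0) + L * norm x"
proof -
  have "norm (f x - f 0) \<le> L * norm x"
    using lipschitz_onD[OF assms, of x 0] by (simp add: dist_norm)
  then show ?thesis
    using norm_triangle_sub[of "f x" "f 0"] by simp
qed

lemma affine_bound_imp_linear_growth:
  fixes g :: "'a::real_normed_vector \<Rightarrow> real"
  assumes "\<And>x. g x \<le> A + B * norm x"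
  shows "\<exists>c>0. \<forall>x. g x \<le> c * (1 + norm x)"
proof (intro exI conjI allI)
  fix x :: 'a
  have "B * norm x \<le> (\<bar>A\<bar> + \<bar>B\<bar> + 1) * norm x"
    by (intro mult_right_mono) auto
  then show "g x \<le> (\<bar>A\<bar> + \<bar>B\<bar> + 1) * (1 + norm x)"
    using assms[of x] by (simp add: distrib_left)
qed simp

theorem lemma1:
  fixes \<Theta> :: "(real^'n) set"
    and \<mu> :: "real^'n \<Rightarrow> real^'n"
    and \<sigma> :: "real^'n \<Rightarrow> real^'n^'n"
  assumes "\<Theta> \<noteq> {}"
    and "C1_hypersurface \<Theta>"
    and "reach \<Theta> > 0"
    and "\<exists>\<epsilon>>0. ereal \<epsilon> < reach \<Theta> \<and> bounded (\<mu> ` nbhd \<Theta> \<epsilon>) \<and> bounded (\<sigma> ` nbhd \<Theta> \<epsilon>)"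
    and "intrinsic_lipschitz_on (UNIV - \<Theta>) \<mu>"
    and "\<exists>L. L-lipschitz_on UNIV \<sigma>"
  shows "\<exists>c>0. \<forall>x. norm (\<mu> x) + norm (\<sigma> x) \<le> c * (1 + norm x)"
proof -
  obtain \<epsilon> M where "\<epsilon> > 0" and M: "\<And>y. y \<in> nbhd \<Theta> \<epsilon> \<Longrightarrow> norm (\<mu> y) \<le> M"
    using assms(4) unfolding bounded_iff by blast
  obtain L where "L \<ge> 0"
    and L: "\<And>x y. closed_segment x y \<subseteq> UNIV - \<Theta> \<Longrightarrow> norm (\<mu> x - \<mu> y) \<le> L * dist x y"
    using intrinsic_lipschitz_on_segmentE[OF assms(5)] by metis
  obtain K where K: "K-lipschitz_on UNIV \<sigma>"
    using assms(6) by blast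
  obtain \<theta>\<^sub>0 where "\<theta>\<^sub>0 \<in> \<Theta>"
    using assms(1) by blast
  have "norm (\<mu> x) + norm (\<sigma> x)
      \<le> (M + L * norm \<theta>\<^sub>0 + norm (\<sigma> 0)) + (L + K) * norm x" for x
  proof -
    have "infdist x \<Theta> \<le> norm x + norm \<theta>\<^sub>0"
      using infdist_le[OF \<open>\<theta>\<^sub>0 \<in> \<Theta>\<close>, of x] norm_triangle_ineq4[of x \<theta>\<^sub>0]
      by (simp add: dist_norm)
    then have "L * infdist x \<Theta> \<le> L * (norm x + norm \<theta>\<^sub>0)"
      using \<open>L \<ge> 0\<close> by (rule mult_left_mono)
    then have "norm (\<mu> x) \<le> M + L * (norm x + norm \<theta>\<^sub>0)"
      using norm_le_nbhd_bound_plus_infdist[OF assms(1) \<open>\<epsilon> > 0\<close> M \<open>L \<ge> 0\<close> L, of x]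
      by linarith
    then show ?thesis
      using lipschitz_on_norm_le[OF K, of x] by (simp add: algebra_simps)
  qed
  then show ?thesis
    by (rule affine_bound_imp_linear_growth)
qed

end
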